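(* Let $n$ be a positive integer. Define $g:T_n\to D_n$ by $g(A,B,C)=r(A,B,C)$ if $(A,B,C)\in R_n$; $g(A,B,C)=s(A,B,C)$ if $(A,B,C)\in U_n$; $g(A,B,C)=t(A,B,C)$ if $(A,B,C)\in V_n\setminus U_n$; and $g(A,B,C)=t(z(A,B,C))$ if $(A,B,C)\in J_n$. Then $g$ is a bijection from $T_n$ onto $D_n$. (In particular $(2n+1)\binom{2n}{n}=\sum_{i+j+k=n}\binom{2i}{i}\binom{2j}{j}\binom{2k}{k}$, the sum over nonnegative integer triples.)
   Context: A lattice path here is a finite (possibly empty) sequence of steps, each an up step $(1,1)$ or a down step $(1,-1)$, drawn as a polygonal line from a given starting lattice point; its lattice points are its starting point and the endpoints of its steps; the height of a point is its vertical coordinate. Concatenation of paths means drawing them successively, each starting at the endpoint of the preceding one, the first starting at $(0,0)$. $T_n$ is the set of ordered triples $(A,B,C)$ of lattice paths such that for some nonnegative integers $i,j,k$ with $i+j+k=n$, $A$ has $i$ up and $i$ down steps, $B$ has $j$ up and $j$ down steps, and $C$ has $k$ up and $k$ down steps; each of $A,B,C$ is regarded as drawn starting (and hence ending) on the horizontal axis, and heights of points of $C$ refer to this drawing. $D_n$ is the set of pairs $(H,X)$ where $H$ is a lattice path with $n$ up and $n$ down steps drawn from $(0,0)$ to $(2n,0)$ and $X$ is one of the $2n+1$ lattice points of $H$. $R_n$: triples in $T_n$ with $C$ empty. $U_n$: triples with $C$ having a point strictly above the horizontal axis and $B$ either empty or ending with a down step. $V_n$: triples with $C$ having a point strictly below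 the horizontal axis and $B$ either empty or ending with an up step. $I_n=U_n\cap V_n$. $J_n=T_n\setminus(R_n\cup U_n\cup V_n)$. $r:R_n\to D_n$: $r(A,B,\emptyset)=(H,X)$ with $H$ the concatenation of $A$ and $B$ and $X$ the point where $A$ and $B$ meet. $s:U_n\to D_n$: let $K$ be the leftmost point of $C$ of maximal height, cutting $C$ into left part $C_1$ and right part $C_2$; $s(A,B,C)=(H,X)$ with $H$ the concatenation of $C_1,A,B,C_2$ and $X$ the point where $A$ ends and $B$ begins. $t:V_n\to D_n$: same as $s$ but with $K$ the leftmost point of $C$ of minimal height. $z:J_n\to I_n$: $z(A,B,C)=(A,\emptyset,BC)$, where $BC$ is the concatenation of $B$ followed by $C$. *)

theory Defs
  imports Main
begin

text \<open>A lattice path is a list of steps: True = up step (1,1), False = down step (1,-1).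
  Its lattice points are indexed by 0..length P (the point after the first i steps);
  the height of point i (path drawn from height 0) is hgt P i.\<close>

type_synonym path = "bool list"

definition stepval :: "bool \<Rightarrow> int" where
  "stepval b = (if b then 1 else -1)"

definition hgt :: "path \<Rightarrow> nat \<Rightarrow> int" where
  "hgt P i = sum_list (map stepval (take i P))"

definition ups :: "path \<Rightarrow> nat" where
  "ups P = length (filter (\<lambda>b. b) P)"

definition downs :: "path \<Rightarrow> nat" where
  "downs P = length (filter (\<lambda>b. \<not> b) P)"

definition T :: "nat \<Rightarrow> (path \<times> path \<times> path) set" where
  "T n = {(A, B, C). \<exists>i j k. i + j + k = n \<and> ups A = i \<and> downs A = i
            \<and> ups B = j \<and> downs B = j \<and> ups C = k \<and> downs C = k}"

text \<open>D n: pairs (H, X) with H a path with n up and n down steps from (0,0) to (2n,0),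
  X one of its 2n+1 lattice points, represented by its index (x-coordinate) 0..2n.\<close>
definition D :: "nat \<Rightarrow> (path \<times> nat) set" where
  "D n = {(H, x). ups H = n \<and> downs H = n \<and> x \<le> length H}"

definition R :: "nat \<Rightarrow> (path \<times> path \<times> path) set" where
  "R n = {(A, B, C). (A, B, C) \<in> T n \<and> C = []}"

definition U :: "nat \<Rightarrow> (path \<times> path \<times> path) set" where
  "U n = {(A, B, C). (A, B, C) \<in> T n \<and> (\<exists>i \<le> length C. hgt C i > 0)
            \<and> (B = [] \<or> last B = False)}"

definition V :: "nat \<Rightarrow> (path \<times> path \<times> path) set" where
  "V n = {(A, B, C). (A, B, C) \<in> T n \<and> (\<exists>i \<le> length C. hgt C i < 0)
            \<and> (B = [] \<or> last B = True)}"

definition I :: "nat \<Rightarrow> (path \<times> path \<times> path) set" where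
  "I n = U n \<inter> V n"

definition J :: "nat \<Rightarrow> (path \<times> path \<times> path) set" where
  "J n = T n - (R n \<union> U n \<union> V n)"

definition leftmost_max :: "path \<Rightarrow> nat" where
  "leftmost_max C = (LEAST i. i \<le> length C \<and> (\<forall>j \<le> length C. hgt C j \<le> hgt C i))"

definition leftmost_min :: "path \<Rightarrow> nat" where
  "leftmost_min C = (LEAST i. i \<le> length C \<and> (\<forall>j \<le> length C. hgt C i \<le> hgt C j))"

definition rmap :: "path \<times> path \<times> path \<Rightarrow> path \<times> nat" where
  "rmap = (\<lambda>(A, B, C). (A @ B, length A))"

definition smap :: "path \<times> path \<times> path \<Rightarrow> path \<times> nat" where
  "smap = (\<lambda>(A, B, C). let k = leftmost_max C in
      (take k C @ A @ B @ drop k C, length (take k C) + length A))"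

definition tmap :: "path \<times> path \<times> path \<Rightarrow> path \<times> nat" where
  "tmap = (\<lambda>(A, B, C). let k = leftmost_min C in
      (take k C @ A @ B @ drop k C, length (take k C) + length A))"

definition zmap :: "path \<times> path \<times> path \<Rightarrow> path \<times> path \<times> path" where
  "zmap = (\<lambda>(A, B, C). (A, [], B @ C))"

definition gmap :: "nat \<Rightarrow> path \<times> path \<times> path \<Rightarrow> path \<times> nat" where
  "gmap n x = (if x \<in> R n then rmap x
               else if x \<in> U n then smap x
               else if x \<in> V n then tmap x
               else tmap (zmap x))"

end

theory Submission
  imports Defs
begin

text \<open>
  Sort the pairs (H, X) by the sign of the height of X. The map t is undone by cutting H at the first
  visit to the level of X and at the point from which H never again drops below that level: the two
  excised pieces are A and B (the latter ending with an up step), and gluing the rest back together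
  gives C, whose leftmost minimum lies exactly at the seam. Reflecting all paths in the horizontal
  axis turns s into t, so s is undone in the same way; r is undone by cutting H at X. Finally z is
  undone by splitting a path of I at the start of its last excursion to one side of the axis. Hence
  r, s and t (the latter applied directly on V - U and after z on J) biject R, U and
  (V - U) \<union> J onto the points of height zero, positive height and negative height, and counting
  both sides gives the binomial identity.
\<close>

section \<open>Heights of lattice paths\<close>

lemma hgt_0 [simp]: "hgt P 0 = 0"
  by (simp add: hgt_def)

lemma hgt_Nil [simp]: "hgt [] i = 0"
  by (simp add: hgt_def)

lemma hgt_append: "hgt (P @ Q) i = hgt P i + hgt Q (i - length P)"
  by (simp add: hgt_def)

lemma hgt_beyond_length: "length P \<le> i \<Longrightarrow> hgt P i = hgt P (length P)"
  by (simp add: hgt_def)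

lemma hgt_zero_beyond: "hgt P (length P) = 0 \<Longrightarrow> length P \<le> i \<Longrightarrow> hgt P i = 0"
  using hgt_beyond_length by metis

lemma hgt_Suc: "i < length P \<Longrightarrow> hgt P (Suc i) = hgt P i + stepval (P ! i)"
  by (simp add: hgt_def take_Suc_conv_app_nth)

lemma hgt_take: "hgt (take m P) i = hgt P (min i m)"
  by (simp add: hgt_def min.commute)

lemma hgt_drop: "m \<le> length P \<Longrightarrow> hgt (drop m P) i = hgt P (m + i) - hgt P m"
proof -
  have "take (m + i) P = take m P @ take i (drop m P)" by (simp add: take_add)
  then show ?thesis by (simp add: hgt_def)
qed

lemma hgt_length: "hgt P (length P) = int (ups P) - int (downs P)"
  by (induction P) (auto simp: ups_def downs_def hgt_def stepval_def)

lemma ups_append [simp]: "ups (P @ Q) = ups P + ups Q"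
  by (simp add: ups_def)

lemma downs_append [simp]: "downs (P @ Q) = downs P + downs Q"
  by (simp add: downs_def)

lemma ups_Nil [simp]: "ups [] = 0"
  by (simp add: ups_def)

lemma downs_Nil [simp]: "downs [] = 0"
  by (simp add: downs_def)

lemma ups_plus_downs: "ups P + downs P = length P"
  by (induction P) (auto simp: ups_def downs_def)

lemma hgt_Suc_step:
  assumes "i < length P"
  shows "P ! i \<and> hgt P (Suc i) = hgt P i + 1 \<or> \<not> P ! i \<and> hgt P (Suc i) = hgt P i - 1"
  using hgt_Suc[OF assms] by (simp add: stepval_def)

lemma last_step_up:
  assumes "P \<noteq> []" "last P"
  shows "hgt P (length P - 1) = hgt P (length P) - 1"
  using assms hgt_Suc[of "length P - 1" P] by (simp add: last_conv_nth stepval_def)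

lemma hgt_ivt_up:
  assumes "i \<le> j" "j \<le> length P" "hgt P i \<le> c" "c \<le> hgt P j"
  shows "\<exists>m. i \<le> m \<and> m \<le> j \<and> hgt P m = c"
  using assms
proof (induction j)
  case (Suc j)
  show ?case
  proof (cases "c = hgt P (Suc j)")
    case False
    with Suc.prems have "i \<le> j" "c \<le> hgt P j"
      using hgt_Suc_step[of j P] by (auto simp: le_Suc_eq)
    with Suc show ?thesis by fastforce
  qed (use Suc.prems in auto)
qed auto

lemma hgt_append_balanced:
  "hgt B (length B) = 0 \<Longrightarrow> hgt (B @ C) (length B + i) = hgt C i"
  by (simp add: hgt_append hgt_zero_beyond)

lemma mem_T_iff:
  "(A, B, C) \<in> T n \<longleftrightarrow> hgt A (length A) = 0 \<and> hgt B (length B) = 0 \<and> hgt C (length C) = 0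
     \<and> ups A + ups B + ups C = n"
  by (auto simp: T_def hgt_length)

lemma mem_D_iff: "(H, x) \<in> D n \<longleftrightarrow> ups H = n \<and> downs H = n \<and> x \<le> length H"
  by (simp add: D_def)

definition D_sign :: "nat \<Rightarrow> int \<Rightarrow> (path \<times> nat) set" where
  "D_sign n s = {(H, x) \<in> D n. sgn (hgt H x) = s}"

lemma leftmost_min:
  shows leftmost_min_le_length: "leftmost_min C \<le> length C"
    and leftmost_min_le: "j \<le> length C \<Longrightarrow> hgt C (leftmost_min C) \<le> hgt C j"
    and less_leftmost_min: "i < leftmost_min C \<Longrightarrow> hgt C (leftmost_min C) < hgt C i"
proof -
  let ?P = "\<lambda>i. i \<le> length C \<and> (\<forall>j \<le> length C. hgt C i \<le> hgt C j)"
  have "Min (hgt C ` {..length C}) \<in> hgt C ` {..length C}"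
    by (rule Min_in) auto
  then obtain i0 where "i0 \<le> length C" "hgt C i0 = Min (hgt C ` {..length C})"
    by (metis atMost_iff imageE)
  then have "?P i0" by simp
  then have P: "?P (leftmost_min C)"
    unfolding leftmost_min_def by (rule LeastI)
  then show "leftmost_min C \<le> length C" "j \<le> length C \<Longrightarrow> hgt C (leftmost_min C) \<le> hgt C j"
    by auto
  assume "i < leftmost_min C"
  then have "\<not> ?P i" unfolding leftmost_min_def by (rule not_less_Least)
  with \<open>i < leftmost_min C\<close> P show "hgt C (leftmost_min C) < hgt C i"
    by force
qed

lemma leftmost_min_eqI:
  assumes "k \<le> length C" "\<And>j. j \<le> length C \<Longrightarrow> hgt C k \<le> hgt C j"
    "\<And>i. i < k \<Longrightarrow> hgt C k < hgt C i"
  shows "leftmost_min C = k"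
  unfolding leftmost_min_def
  by (rule Least_equality) (use assms in \<open>auto simp: not_le[symmetric]\<close>)

section \<open>Reflection in the horizontal axis\<close>

definition mirror :: "path \<Rightarrow> path" where
  "mirror P = map Not P"

lemma hgt_mirror [simp]: "hgt (mirror P) i = - hgt P i"
proof -
  have "sum_list (map stepval (map Not Q)) = - sum_list (map stepval Q)" for Q
    by (induction Q) (auto simp: stepval_def)
  then show ?thesis by (simp add: hgt_def mirror_def take_map)
qed

lemma mirror_mirror [simp]: "mirror (mirror P) = P"
  by (simp add: mirror_def comp_def)

lemma length_mirror [simp]: "length (mirror P) = length P"
  by (simp add: mirror_def)

lemma mirror_Nil [simp]: "mirror [] = []"
  by (simp add: mirror_def)

lemma mirror_eq_Nil_iff [simp]: "mirror P = [] \<longleftrightarrow> P = []"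
  by (simp add: mirror_def)

lemma ups_mirror [simp]: "ups (mirror P) = downs P"
  by (simp add: ups_def downs_def mirror_def comp_def)

lemma downs_mirror [simp]: "downs (mirror P) = ups P"
  by (simp add: ups_def downs_def mirror_def comp_def)

lemma last_mirror: "P \<noteq> [] \<Longrightarrow> last (mirror P) = (\<not> last P)"
  by (simp add: mirror_def last_map)

lemma mirror_append: "mirror (P @ Q) = mirror P @ mirror Q"
  by (simp add: mirror_def)

lemma take_mirror: "take k (mirror P) = mirror (take k P)"
  by (simp add: mirror_def take_map)

lemma drop_mirror: "drop k (mirror P) = mirror (drop k P)"
  by (simp add: mirror_def drop_map)

lemma leftmost_max_mirror: "leftmost_max (mirror C) = leftmost_min C"
  by (simp add: leftmost_max_def leftmost_min_def)

lemma hgt_ivt_down: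
  assumes "i \<le> j" "j \<le> length P" "c \<le> hgt P i" "hgt P j \<le> c"
  shows "\<exists>m. i \<le> m \<and> m \<le> j \<and> hgt P m = c"
  using hgt_ivt_up[of i j "mirror P" "- c"] assms by auto

section \<open>Inverting t\<close>

lemma hgt_splice_before:
  "i \<le> k \<Longrightarrow> k \<le> length C \<Longrightarrow> hgt (take k C @ A @ B @ drop k C) i = hgt C i"
  by (simp add: hgt_append hgt_take)

lemma hgt_splice_first:
  "i \<le> length A \<Longrightarrow> k \<le> length C \<Longrightarrow> hgt (take k C @ A @ B @ drop k C) (k + i) = hgt C k + hgt A i"
  by (simp add: hgt_append hgt_take)

lemma hgt_splice_second:
  assumes "i \<le> length B" "k \<le> length C" "hgt A (length A) = 0"
  shows "hgt (take k C @ A @ B @ drop k C) (k + length A + i) = hgt C k + hgt B i"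
  using assms hgt_zero_beyond[of A] by (simp add: hgt_append hgt_take)

lemma hgt_splice_after:
  assumes "k \<le> length C" "hgt A (length A) = 0" "hgt B (length B) = 0"
  shows "hgt (take k C @ A @ B @ drop k C) (k + length A + length B + i) = hgt C (k + i)"
  using assms hgt_zero_beyond[of A] hgt_zero_beyond[of B] by (simp add: hgt_append hgt_take hgt_drop)

lemma hgt_cut:
  assumes "a \<le> b" "b \<le> length H"
  shows "hgt (take a H @ drop b H) j =
    (if j \<le> a then hgt H j else hgt H a + hgt H (b + (j - a)) - hgt H b)"
proof -
  have "length (take a H) = a" using assms by simp
  then show ?thesis using assms by (simp add: hgt_append hgt_take hgt_drop min_def)
qed

lemma hgt_segment:
  "a \<le> x \<Longrightarrow> x \<le> length H \<Longrightarrow> hgt (take (x - a) (drop a H)) (x - a) = hgt H x - hgt H a"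
  by (simp add: hgt_take hgt_drop)

lemma take_drop_segments:
  assumes "a \<le> x" "x \<le> b" "b \<le> length H"
  shows "take a H @ take (x - a) (drop a H) @ take (b - x) (drop x H) @ drop b H = H"
proof -
  have "take x H = take a H @ take (x - a) (drop a H)"
    using take_add[of a "x - a" H] assms by simp
  moreover have "take b H = take x H @ take (b - x) (drop x H)"
    using take_add[of x "b - x" H] assms by simp
  ultimately show ?thesis by (metis append.assoc append_take_drop_id)
qed

definition first_visit :: "path \<Rightarrow> nat \<Rightarrow> nat" where
  "first_visit H x = (LEAST i. hgt H i = hgt H x)"

definition settle_point :: "path \<Rightarrow> nat \<Rightarrow> nat" where
  "settle_point H x = (LEAST b. x \<le> b \<and> (\<forall>j. b \<le> j \<and> j \<le> length H \<longrightarrow> hgt H x \<le> hgt H j))"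

lemma first_visit:
  assumes "x \<le> length H" "hgt H x \<le> 0"
  shows first_visit_le: "first_visit H x \<le> x"
    and hgt_first_visit: "hgt H (first_visit H x) = hgt H x"
    and less_first_visit: "i < first_visit H x \<Longrightarrow> hgt H x < hgt H i"
proof -
  show "first_visit H x \<le> x" unfolding first_visit_def by (rule Least_le) simp
  show "hgt H (first_visit H x) = hgt H x" unfolding first_visit_def by (rule LeastI) simp
  assume i: "i < first_visit H x"
  show "hgt H x < hgt H i"
  proof (rule ccontr)
    assume "\<not> ?thesis"
    moreover have "i \<le> length H" using i \<open>first_visit H x \<le> x\<close> assms by simp
    ultimately obtain m where "m \<le> i" "hgt H m = hgt H x"
      using hgt_ivt_down[of 0 i H "hgt H x"] assms by force
    moreover from \<open>hgt H m = hgt H x\<close> have "first_visit H x \<le> m"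
      unfolding first_visit_def by (rule Least_le)
    ultimately show False using i by simp
  qed
qed

lemma settle_point:
  assumes "x \<le> length H" "hgt H x \<le> hgt H (length H)"
  shows le_settle_point: "x \<le> settle_point H x"
    and settle_point_le_length: "settle_point H x \<le> length H"
    and settle_point_stays: "settle_point H x \<le> j \<Longrightarrow> j \<le> length H \<Longrightarrow> hgt H x \<le> hgt H j"
    and hgt_settle_point: "hgt H (settle_point H x) = hgt H x"
    and settle_point_after_up: "x < settle_point H x \<Longrightarrow> H ! (settle_point H x - 1)"
proof -
  let ?P = "\<lambda>b. x \<le> b \<and> (\<forall>j. b \<le> j \<and> j \<le> length H \<longrightarrow> hgt H x \<le> hgt H j)"
  have "?P (length H)" using assms by auto
  then have P: "?P (settle_point H x)" and le: "settle_point H x \<le> length H"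
    unfolding settle_point_def by (rule LeastI, rule Least_le)
  then show "x \<le> settle_point H x" "settle_point H x \<le> length H"
    "settle_point H x \<le> j \<Longrightarrow> j \<le> length H \<Longrightarrow> hgt H x \<le> hgt H j"
    by auto
  have "hgt H x = hgt H (settle_point H x) \<and> (x < settle_point H x \<longrightarrow> H ! (settle_point H x - 1))"
  proof (cases "x < settle_point H x")
    case True
    define g where "g = settle_point H x - 1"
    have g: "Suc g = settle_point H x" "g < length H" using True le by (auto simp: g_def)
    then have "\<not> ?P g" unfolding settle_point_def by (intro not_less_Least) simp
    then obtain j where j: "g \<le> j" "j \<le> length H" "hgt H j < hgt H x"
      using True by (auto simp: g_def not_le)
    have "j = g"
    proof (rule ccontr)
      assume "j \<noteq> g"
      then have "settle_point H x \<le> j" using j(1) g(1) by simp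
      then show False using P j by auto
    qed
    moreover have "hgt H x \<le> hgt H (Suc g)" using P g by simp
    ultimately show ?thesis
      using hgt_Suc_step[OF g(2)] g(1) j(3) by (auto simp: g_def)
  qed (use P in auto)
  then show "hgt H (settle_point H x) = hgt H x"
    "x < settle_point H x \<Longrightarrow> H ! (settle_point H x - 1)" by auto
qed

lemma leftmost_min_cut:
  assumes "a \<le> b" "b \<le> length H" "hgt H b = hgt H a"
    "\<And>i. i < a \<Longrightarrow> hgt H a < hgt H i"
    "\<And>j. b \<le> j \<Longrightarrow> j \<le> length H \<Longrightarrow> hgt H a \<le> hgt H j"
  shows "leftmost_min (take a H @ drop b H) = a"
proof (rule leftmost_min_eqI)
  show "hgt (take a H @ drop b H) a \<le> hgt (take a H @ drop b H) j"
    if "j \<le> length (take a H @ drop b H)" for j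
    using that assms(3,5) assms(4)[of j] hgt_cut[OF assms(1,2), of j] hgt_cut[OF assms(1,2), of a]
    by (cases "j < a") auto
qed (use assms hgt_cut[OF assms(1,2)] in auto)

lemma tmap_segments:
  assumes "a \<le> x" "x \<le> b" "b \<le> length H" "leftmost_min (take a H @ drop b H) = a"
  shows "tmap (take (x - a) (drop a H), take (b - x) (drop x H), take a H @ drop b H) = (H, x)"
proof -
  have "take a (take a H @ drop b H) = take a H" "drop a (take a H @ drop b H) = drop b H"
    using assms(1-3) by auto
  then show ?thesis
    using assms take_drop_segments[OF assms(1-3)] by (simp add: tmap_def Let_def)
qed

lemma segments_in_T:
  assumes "a \<le> x" "x \<le> b" "b \<le> length H" "hgt H a = hgt H x" "hgt H b = hgt H x"
    "ups H = n" "downs H = n"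
  shows "(take (x - a) (drop a H), take (b - x) (drop x H), take a H @ drop b H) \<in> T n"
proof -
  have H: "hgt H (length H) = 0" using assms(6,7) by (simp add: hgt_length)
  have "hgt (take a H @ drop b H) (length (take a H @ drop b H)) = 0"
    using hgt_cut[OF _ assms(3)] assms(1-5) H by (cases "b = length H") auto
  moreover have "ups (take (x - a) (drop a H)) + ups (take (b - x) (drop x H))
      + ups (take a H @ drop b H) = n"
    using arg_cong[OF take_drop_segments[OF assms(1-3)], of ups] assms(6) by simp
  ultimately show ?thesis
    using hgt_segment[of a x H] hgt_segment[of x b H] assms(1-5) by (simp add: mem_T_iff)
qed

definition tmap_inv :: "path \<times> nat \<Rightarrow> path \<times> path \<times> path" where
  "tmap_inv = (\<lambda>(H, x). let a = first_visit H x; b = settle_point H x in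
     (take (x - a) (drop a H), take (b - x) (drop x H), take a H @ drop b H))"

lemma tmap_tmap_inv:
  assumes "(H, x) \<in> D n" "hgt H x < 0"
  shows "tmap_inv (H, x) \<in> V n \<and> tmap (tmap_inv (H, x)) = (H, x)"
proof -
  have x: "x \<le> length H" and H: "ups H = n" "downs H = n"
    using assms(1) by (auto simp: mem_D_iff)
  define a where "a = first_visit H x"
  define b where "b = settle_point H x"
  have "hgt H x \<le> hgt H (length H)" using assms(2) H by (simp add: hgt_length)
  note b = settle_point[OF x this, folded b_def]
  note a = first_visit[OF x less_imp_le[OF assms(2)], folded a_def]
  have ab: "a \<le> x" "x \<le> b" "b \<le> length H" "hgt H a = hgt H x" "hgt H b = hgt H x"
    using a b by simp_all
  have "leftmost_min (take a H @ drop b H) = a"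
    using a b by (intro leftmost_min_cut) auto
  have inv: "tmap_inv (H, x) = (take (x - a) (drop a H), take (b - x) (drop x H), take a H @ drop b H)"
    by (simp add: tmap_inv_def a_def b_def Let_def)
  have "take (b - x) (drop x H) = [] \<or> last (take (b - x) (drop x H))"
  proof (cases "x = b")
    case False
    then have "last (take (b - x) (drop x H)) = H ! (b - 1)"
      using ab by (simp add: last_conv_nth)
    then show ?thesis using b(5) False ab by simp
  qed simp
  moreover have "\<exists>i \<le> length (take a H @ drop b H). hgt (take a H @ drop b H) i < 0"
    using hgt_cut[of a b H a] ab assms(2) by (intro exI[of _ a]) simp
  ultimately show ?thesis
    unfolding inv V_def using segments_in_T[OF ab H] tmap_segments[OF ab(1-3)] \<open>leftmost_min _ = a\<close>
    by simp
qed

lemma first_visit_splice: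
  assumes "k \<le> length C" "hgt A (length A) = 0" "\<And>i. i < k \<Longrightarrow> hgt C k < hgt C i"
  shows "first_visit (take k C @ A @ B @ drop k C) (k + length A) = k"
  unfolding first_visit_def
proof (rule Least_equality)
  fix y
  assume "hgt (take k C @ A @ B @ drop k C) y = hgt (take k C @ A @ B @ drop k C) (k + length A)"
  then show "k \<le> y"
    using assms(1,2) assms(3)[of y] hgt_splice_before[of y k C] hgt_splice_first[of "length A" A k C]
    by (cases "y < k") auto
qed (use assms in \<open>simp add: hgt_splice_before hgt_splice_first\<close>)

lemma settle_point_splice:
  assumes "k \<le> length C" "hgt A (length A) = 0" "hgt B (length B) = 0" "B = [] \<or> last B"
    "\<And>j. j \<le> length C \<Longrightarrow> hgt C k \<le> hgt C j"
  shows "settle_point (take k C @ A @ B @ drop k C) (k + length A) = k + length A + length B"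
    (is "settle_point ?H ?x = _")
proof -
  have hgt_x: "hgt ?H ?x = hgt C k"
    using hgt_splice_first[of "length A" A k C] assms by simp
  show ?thesis
    unfolding settle_point_def
  proof (rule Least_equality)
    have "hgt C k \<le> hgt ?H j" if j: "?x + length B \<le> j" "j \<le> length ?H" for j
    proof -
      obtain i where "j = ?x + length B + i" using le_Suc_ex[OF j(1)] by (elim exE)
      then show ?thesis
        using j assms hgt_splice_after[OF assms(1-3), of i] by simp
    qed
    then show "?x \<le> ?x + length B \<and> (\<forall>j. ?x + length B \<le> j \<and> j \<le> length ?H \<longrightarrow> hgt ?H ?x \<le> hgt ?H j)"
      using hgt_x by simp
  next
    fix y
    assume y: "?x \<le> y \<and> (\<forall>j. y \<le> j \<and> j \<le> length ?H \<longrightarrow> hgt ?H ?x \<le> hgt ?H j)"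
    show "?x + length B \<le> y"
    proof (cases "B = []")
      case False
      let ?j = "?x + (length B - 1)"
      have "hgt ?H ?j < hgt ?H ?x"
        using hgt_splice_second[of "length B - 1" B k C A] assms(1-4) last_step_up[of B] hgt_x False
        by simp
      moreover have "?j \<le> length ?H" using assms(1) by simp
      ultimately have "\<not> y \<le> ?j" using y by force
      then show ?thesis by simp
    qed (use y in simp)
  qed
qed

lemma tmap_splice:
  "tmap (A, B, C) = (take (leftmost_min C) C @ A @ B @ drop (leftmost_min C) C, leftmost_min C + length A)"
  using leftmost_min_le_length[of C] by (simp add: tmap_def Let_def)

lemma tmap_in_D: "(A, B, C) \<in> T n \<Longrightarrow> tmap (A, B, C) \<in> D n"
  using ups_append[of "take (leftmost_min C) C" "drop (leftmost_min C) C", unfolded append_take_drop_id]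
    downs_append[of "take (leftmost_min C) C" "drop (leftmost_min C) C", unfolded append_take_drop_id]
    leftmost_min_le_length[of C]
  by (auto simp: tmap_splice mem_D_iff T_def)

lemma tmap_inv_tmap:
  assumes "(A, B, C) \<in> V n"
  shows "hgt (fst (tmap (A, B, C))) (snd (tmap (A, B, C))) < 0 \<and> tmap_inv (tmap (A, B, C)) = (A, B, C)"
proof -
  define k where "k = leftmost_min C"
  have k: "k \<le> length C" "\<And>j. j \<le> length C \<Longrightarrow> hgt C k \<le> hgt C j" "\<And>i. i < k \<Longrightarrow> hgt C k < hgt C i"
    unfolding k_def by (fact leftmost_min)+
  have bal: "hgt A (length A) = 0" "hgt B (length B) = 0" and "B = [] \<or> last B"
    and "\<exists>i \<le> length C. hgt C i < 0"
    using assms by (auto simp: V_def mem_T_iff)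
  then have "hgt C k < 0" using k(2) by force
  moreover have "tmap (A, B, C) = (take k C @ A @ B @ drop k C, k + length A)"
    by (simp add: tmap_splice k_def)
  moreover note first_visit_splice[OF k(1) bal(1) k(3), of B]
    settle_point_splice[OF k(1) bal \<open>B = [] \<or> last B\<close> k(2)]
  ultimately show ?thesis
    using hgt_splice_first[of "length A" A k C] k(1) bal(1) by (simp add: tmap_inv_def)
qed

lemma bij_betw_tmap: "bij_betw tmap (V n) (D_sign n (-1))"
proof (rule bij_betw_byWitness[where f' = tmap_inv])
  show "\<forall>y \<in> V n. tmap_inv (tmap y) = y" "tmap ` V n \<subseteq> D_sign n (-1)"
    using tmap_inv_tmap tmap_in_D by (fastforce simp: V_def D_sign_def sgn_if)+
  have "tmap_inv d \<in> V n \<and> tmap (tmap_inv d) = d" if "d \<in> D_sign n (-1)" for d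
    using that tmap_tmap_inv by (auto simp: D_sign_def sgn_if split: if_splits)
  then show "\<forall>d \<in> D_sign n (-1). tmap (tmap_inv d) = d" "tmap_inv ` D_sign n (-1) \<subseteq> V n"
    by auto
qed

section \<open>Inverting s and r\<close>

definition mirror3 :: "path \<times> path \<times> path \<Rightarrow> path \<times> path \<times> path" where
  "mirror3 = (\<lambda>(A, B, C). (mirror A, mirror B, mirror C))"

lemma mirror3_mirror3 [simp]: "mirror3 (mirror3 y) = y"
  by (cases y) (simp add: mirror3_def)

lemma mirror3_eq_iff [simp]: "mirror3 y = mirror3 z \<longleftrightarrow> y = z"
  by (metis mirror3_mirror3)

lemma mirror3_in_T_iff [simp]: "mirror3 y \<in> T n \<longleftrightarrow> y \<in> T n"
  by (cases y) (auto simp: mirror3_def T_def)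

lemma mirror3_in_V_iff: "mirror3 y \<in> V n \<longleftrightarrow> y \<in> U n"
proof (cases y)
  case (fields A B C)
  have "(mirror B = [] \<or> last (mirror B)) \<longleftrightarrow> (B = [] \<or> \<not> last B)"
    by (cases "B = []") (auto simp: last_mirror)
  then show ?thesis
    using fields mirror3_in_T_iff[of y n] by (simp add: mirror3_def V_def U_def)
qed

lemma mirror3_in_U_iff: "mirror3 y \<in> U n \<longleftrightarrow> y \<in> V n"
  using mirror3_in_V_iff[of "mirror3 y" n] by simp

lemma smap_eq_mirror_tmap: "smap = apfst mirror \<circ> tmap \<circ> mirror3"
proof
  fix y :: "path \<times> path \<times> path"
  obtain A B C where y: "y = (A, B, C)" by (cases y)
  have "leftmost_min (mirror C) = leftmost_max C"
    using leftmost_max_mirror[of "mirror C"] by simp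
  then show "smap y = (apfst mirror \<circ> tmap \<circ> mirror3) y"
    by (simp add: y smap_def tmap_def mirror3_def Let_def take_mirror drop_mirror mirror_append)
qed

lemma bij_betw_mirror3: "bij_betw mirror3 (U n) (V n)"
  by (rule bij_betw_byWitness[where f' = mirror3]) (auto simp: mirror3_in_V_iff mirror3_in_U_iff)

lemma bij_betw_mirror_D_sign: "bij_betw (apfst mirror) (D_sign n s) (D_sign n (- s))"
  by (rule bij_betw_byWitness[where f' = "apfst mirror"])
    (auto simp: D_sign_def mem_D_iff)

lemma bij_betw_smap: "bij_betw smap (U n) (D_sign n 1)"
  unfolding smap_eq_mirror_tmap
  using bij_betw_trans[OF bij_betw_trans[OF bij_betw_mirror3 bij_betw_tmap] bij_betw_mirror_D_sign]
  by (simp add: comp_assoc)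

lemma bij_betw_rmap: "bij_betw rmap (R n) (D_sign n 0)"
proof (rule bij_betw_byWitness[where f' = "\<lambda>(H, x). (take x H, drop x H, [])"])
  show "\<forall>y \<in> R n. (\<lambda>(H, x). (take x H, drop x H, [])) (rmap y) = y"
    by (auto simp: R_def rmap_def)
  show "rmap ` R n \<subseteq> D_sign n 0"
    by (auto simp: R_def rmap_def D_sign_def mem_D_iff mem_T_iff hgt_append hgt_length)
  have "(take x H, drop x H, []) \<in> R n \<and> rmap (take x H, drop x H, []) = (H, x)"
    if "(H, x) \<in> D_sign n 0" for H x
  proof -
    have "x \<le> length H" "hgt H x = 0" "ups H = n" "downs H = n"
      using that by (auto simp: D_sign_def mem_D_iff sgn_0_0)
    moreover have "ups (take x H) + ups (drop x H) = ups H"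
      using ups_append[of "take x H" "drop x H"] by simp
    moreover have "hgt H (length H) = 0"
      using \<open>ups H = n\<close> \<open>downs H = n\<close> by (simp add: hgt_length)
    ultimately show ?thesis
      by (simp add: R_def rmap_def mem_T_iff hgt_take hgt_drop)
  qed
  then show "\<forall>d \<in> D_sign n 0. rmap ((\<lambda>(H, x). (take x H, drop x H, [])) d) = d"
    "(\<lambda>(H, x). (take x H, drop x H, [])) ` D_sign n 0 \<subseteq> R n"
    by auto
qed

section \<open>Inverting z\<close>

definition one_sided_from :: "path \<Rightarrow> nat \<Rightarrow> bool" where
  "one_sided_from C p \<longleftrightarrow> (\<forall>i. p \<le> i \<and> i \<le> length C \<longrightarrow> 0 \<le> hgt C i)
                          \<or> (\<forall>i. p \<le> i \<and> i \<le> length C \<longrightarrow> hgt C i \<le> 0)"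

definition one_sided_start :: "path \<Rightarrow> nat" where
  "one_sided_start C = (LEAST p. p \<le> length C \<and> hgt C p = 0 \<and> one_sided_from C p)"

definition zmap_inv :: "path \<times> path \<times> path \<Rightarrow> path \<times> path \<times> path" where
  "zmap_inv = (\<lambda>(A, B, C). (A, take (one_sided_start C) C, drop (one_sided_start C) C))"

lemma one_sided_from_mirror [simp]: "one_sided_from (mirror C) p = one_sided_from C p"
  unfolding one_sided_from_def by auto

lemma one_sided_start_mirror [simp]: "one_sided_start (mirror C) = one_sided_start C"
  by (simp add: one_sided_start_def)

lemma one_sided_start:
  assumes "hgt C (length C) = 0"
  shows one_sided_start_le_length: "one_sided_start C \<le> length C"
    and hgt_one_sided_start: "hgt C (one_sided_start C) = 0"
    and one_sided_from_start: "one_sided_from C (one_sided_start C)"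
    and not_one_sided_before_start:
      "q < one_sided_start C \<Longrightarrow> hgt C q = 0 \<Longrightarrow> \<not> one_sided_from C q"
proof -
  let ?P = "\<lambda>p. p \<le> length C \<and> hgt C p = 0 \<and> one_sided_from C p"
  have "?P (length C)" using assms by (auto simp: one_sided_from_def)
  then have "?P (one_sided_start C)" unfolding one_sided_start_def by (rule LeastI)
  then show "one_sided_start C \<le> length C" "hgt C (one_sided_start C) = 0"
    "one_sided_from C (one_sided_start C)" by auto
  assume "q < one_sided_start C" "hgt C q = 0"
  moreover from \<open>q < one_sided_start C\<close> have "\<not> ?P q"
    unfolding one_sided_start_def by (rule not_less_Least)
  ultimately show "\<not> one_sided_from C q"
    using \<open>one_sided_start C \<le> length C\<close> by simp
qed

lemma last_zero_before:
  assumes "0 < r"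
  obtains q where "q < r" "hgt C q = 0" "\<And>m. q < m \<Longrightarrow> m < r \<Longrightarrow> hgt C m \<noteq> 0"
proof -
  let ?P = "\<lambda>q. q < r \<and> hgt C q = 0"
  have "?P 0" and bound: "\<And>q. ?P q \<Longrightarrow> q \<le> r" using assms by auto
  then have "?P (Greatest ?P)" by (rule GreatestI_nat)
  moreover have "\<And>m. ?P m \<Longrightarrow> m \<le> Greatest ?P" by (rule Greatest_le_nat[OF _ bound])
  ultimately show ?thesis using that by (meson not_le)
qed

lemma one_sided_between_zeros:
  assumes "r \<le> length C" "\<And>m. q < m \<Longrightarrow> m < r \<Longrightarrow> hgt C m \<noteq> 0"
    "hgt C q = 0" "hgt C r = 0"
  shows "(\<forall>i. q \<le> i \<and> i \<le> r \<longrightarrow> 0 \<le> hgt C i)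
    \<or> (\<forall>i. q \<le> i \<and> i \<le> r \<longrightarrow> hgt C i \<le> 0)"
proof (rule ccontr)
  assume "\<not> ?thesis"
  then obtain i j where ij: "q \<le> i" "i \<le> r" "hgt C i < 0" "q \<le> j" "j \<le> r" "0 < hgt C j"
    by (auto simp: not_le)
  then have "\<exists>m. min i j \<le> m \<and> m \<le> max i j \<and> hgt C m = 0"
    using hgt_ivt_up[of i j C 0] hgt_ivt_down[of j i C 0] assms(1) by (cases "i \<le> j") auto
  moreover have "q < min i j" "max i j < r"
    using ij assms(3,4) by (auto simp: le_less)
  ultimately show False using assms(2) by fastforce
qed

lemma one_sided_start_less_length:
  assumes "hgt C (length C) = 0" "C \<noteq> []"
  shows "one_sided_start C < length C"
proof -
  obtain q where q: "q < length C" "hgt C q = 0" "\<And>m. q < m \<Longrightarrow> m < length C \<Longrightarrow> hgt C m \<noteq> 0"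
    using last_zero_before[of "length C" C] assms(2) by auto
  then have "one_sided_from C q"
    using one_sided_between_zeros[of "length C" C q] assms(1) by (auto simp: one_sided_from_def)
  then show ?thesis
    using not_one_sided_before_start[OF assms(1)] q(1,2) by (meson le_less_trans not_le)
qed

lemma one_sided_start_append:
  assumes "B \<noteq> []" "last B" "hgt B (length B) = 0" "0 < hgt C 1"
    "\<And>i. i \<le> length C \<Longrightarrow> 0 \<le> hgt C i"
  shows "one_sided_start (B @ C) = length B"
  unfolding one_sided_start_def
proof (rule Least_equality)
  have "0 \<le> hgt (B @ C) i" if "length B \<le> i" "i \<le> length (B @ C)" for i
    using that assms(5)[of "i - length B"] hgt_append_balanced[OF assms(3), where i="i - length B" and C=C]
    by simp
  then show "length B \<le> length (B @ C) \<and> hgt (B @ C) (length B) = 0 \<and> one_sided_from (B @ C) (length B)"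
    using assms(3) by (simp add: hgt_append one_sided_from_def)
next
  fix p
  assume p: "p \<le> length (B @ C) \<and> hgt (B @ C) p = 0 \<and> one_sided_from (B @ C) p"
  have "C \<noteq> []" using assms(4) by auto
  have neg: "hgt (B @ C) (length B - 1) < 0"
    using assms(1-3) last_step_up[of B] by (simp add: hgt_append)
  have pos: "0 < hgt (B @ C) (length B + 1)"
    using hgt_append_balanced[OF assms(3), where i=1 and C=C] assms(4) by simp
  have "length B + 1 \<le> length (B @ C)" using \<open>C \<noteq> []\<close> by (simp add: Suc_le_eq)
  show "length B \<le> p"
  proof (rule ccontr)
    assume "\<not> length B \<le> p"
    then have "p \<le> length B - 1" by simp
    from p have "one_sided_from (B @ C) p" by simp
    then show False
      unfolding one_sided_from_def
    proof
      assume "\<forall>i. p \<le> i \<and> i \<le> length (B @ C) \<longrightarrow> 0 \<le> hgt (B @ C) i"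
      then show False using neg \<open>p \<le> length B - 1\<close> by (auto dest: spec[of _ "length B - 1"])
    next
      assume "\<forall>i. p \<le> i \<and> i \<le> length (B @ C) \<longrightarrow> hgt (B @ C) i \<le> 0"
      then show False using pos \<open>p \<le> length B - 1\<close> \<open>length B + 1 \<le> length (B @ C)\<close>
        by (auto dest: spec[of _ "length B + 1"])
    qed
  qed
qed

lemma zmap_J_if_up_first:
  assumes "(A, B, C) \<in> J n" "0 < hgt C 1"
  shows "zmap (A, B, C) \<in> I n \<and> zmap_inv (zmap (A, B, C)) = (A, B, C)"
proof -
  have T: "(A, B, C) \<in> T n" and "(A, B, C) \<notin> U n" "(A, B, C) \<notin> V n"
    using assms(1) by (auto simp: J_def)
  have "C \<noteq> []" using assms(2) by auto
  then have "\<exists>i \<le> length C. 0 < hgt C i" using assms(2) by (intro exI[of _ 1]) (auto simp: Suc_le_eq)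
  then have B: "B \<noteq> []" "last B" using \<open>(A, B, C) \<notin> U n\<close> T by (auto simp: U_def)
  then have C_nonneg: "\<And>i. i \<le> length C \<Longrightarrow> 0 \<le> hgt C i"
    using \<open>(A, B, C) \<notin> V n\<close> T by (auto simp: V_def not_less)
  have balB: "hgt B (length B) = 0" using T by (simp add: mem_T_iff)
  have "zmap_inv (zmap (A, B, C)) = (A, B, C)"
    using one_sided_start_append[OF B balB assms(2) C_nonneg] by (simp add: zmap_def zmap_inv_def)
  moreover have "\<exists>i \<le> length (B @ C). 0 < hgt (B @ C) i"
    using hgt_append_balanced[OF balB, where i=1 and C=C] assms(2) \<open>C \<noteq> []\<close>
    by (intro exI[of _ "length B + 1"]) (auto simp: Suc_le_eq)
  moreover have "\<exists>i \<le> length (B @ C). hgt (B @ C) i < 0"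
    using B balB last_step_up[of B] by (intro exI[of _ "length B - 1"]) (simp add: hgt_append)
  moreover have "(A, [], B @ C) \<in> T n"
    using T by (simp add: T_def)
  ultimately show ?thesis by (simp add: zmap_def I_def U_def V_def)
qed

lemma step_before_one_sided_start:
  assumes "hgt C (length C) = 0" "0 < one_sided_start C"
    "\<And>i. one_sided_start C \<le> i \<Longrightarrow> i \<le> length C \<Longrightarrow> 0 \<le> hgt C i"
  shows "C ! (one_sided_start C - 1)"
proof (rule ccontr)
  define p where "p = one_sided_start C"
  have p: "0 < p" "p \<le> length C" "hgt C p = 0"
    using assms one_sided_start[OF assms(1)] by (auto simp: p_def)
  assume "\<not> C ! (one_sided_start C - 1)"
  then have "hgt C (p - 1) = 1"
    using hgt_Suc_step[of "p - 1" C] p by (simp add: p_def)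
  obtain q where q: "q < p" "hgt C q = 0" "\<And>m. q < m \<Longrightarrow> m < p \<Longrightarrow> hgt C m \<noteq> 0"
    using last_zero_before[OF p(1)] by blast
  have "0 \<le> hgt C i" if "q \<le> i" "i \<le> length C" for i
  proof (cases "i \<le> p")
    case True
    have "(\<forall>i. q \<le> i \<and> i \<le> p \<longrightarrow> 0 \<le> hgt C i)
      \<or> (\<forall>i. q \<le> i \<and> i \<le> p \<longrightarrow> hgt C i \<le> 0)"
      using one_sided_between_zeros[of p C q] p q by simp
    moreover have "q \<le> p - 1" using q(1) by simp
    ultimately show ?thesis
      using that(1) True \<open>hgt C (p - 1) = 1\<close> by (auto dest: spec[of _ "p - 1"])
  qed (use assms(3) that in \<open>simp add: p_def\<close>)
  then have "one_sided_from C q" by (simp add: one_sided_from_def)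
  then show False
    using not_one_sided_before_start[OF assms(1)] q(1,2) by (simp add: p_def)
qed

lemma zmap_inv_I_if_nonneg_tail:
  assumes "(A, B, C) \<in> I n" "\<And>i. one_sided_start C \<le> i \<Longrightarrow> i \<le> length C \<Longrightarrow> 0 \<le> hgt C i"
  shows "zmap_inv (A, B, C) \<in> J n \<and> zmap (zmap_inv (A, B, C)) = (A, B, C)"
proof -
  define p where "p = one_sided_start C"
  have T: "(A, B, C) \<in> T n" and "B = []" and C_neg: "\<exists>i \<le> length C. hgt C i < 0"
    using assms(1) by (auto simp: I_def U_def V_def)
  have balC: "hgt C (length C) = 0" using T by (simp add: mem_T_iff)
  have "0 < p"
  proof (rule ccontr)
    assume "\<not> 0 < p"
    then show False using C_neg assms(2) by (force simp: p_def)
  qed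
  moreover have "C \<noteq> []" using C_neg by auto
  ultimately have "p < length C" "C ! (p - 1)" "hgt C p = 0"
    using one_sided_start_less_length[OF balC] step_before_one_sided_start[OF balC]
      hgt_one_sided_start[OF balC] assms(2) by (auto simp: p_def)
  then have "take p C \<noteq> []" "drop p C \<noteq> []" "last (take p C)"
    using \<open>0 < p\<close> \<open>C \<noteq> []\<close> last_conv_nth[of "take p C"] by auto
  moreover have hgt_drop_p: "hgt (drop p C) i = hgt C (p + i)" for i
    using \<open>p < length C\<close> \<open>hgt C p = 0\<close> by (simp add: hgt_drop)
  moreover have "(A, take p C, drop p C) \<in> T n"
    using T \<open>B = []\<close> balC \<open>p < length C\<close> \<open>hgt C p = 0\<close> hgt_drop_p[of "length C - p"]
      ups_append[of "take p C" "drop p C"]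
    by (simp add: mem_T_iff hgt_take)
  moreover have "\<not> (\<exists>i \<le> length (drop p C). hgt (drop p C) i < 0)"
    using assms(2)[of "p + _"] hgt_drop_p \<open>p < length C\<close> by (auto simp: p_def not_less)
  ultimately have "(A, take p C, drop p C) \<in> J n"
    by (auto simp: J_def R_def U_def V_def)
  then show ?thesis
    using \<open>B = []\<close> by (simp add: zmap_inv_def zmap_def p_def)
qed

lemma mirror3_in_R_iff: "mirror3 y \<in> R n \<longleftrightarrow> y \<in> R n"
  using mirror3_in_T_iff[of y n] by (cases y) (auto simp: R_def mirror3_def)

lemma mirror3_in_J_iff: "mirror3 y \<in> J n \<longleftrightarrow> y \<in> J n"
  unfolding J_def using mirror3_in_R_iff mirror3_in_U_iff mirror3_in_V_iff by auto

lemma mirror3_in_I_iff: "mirror3 y \<in> I n \<longleftrightarrow> y \<in> I n"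
  unfolding I_def using mirror3_in_U_iff mirror3_in_V_iff by auto

lemma zmap_mirror3: "zmap (mirror3 y) = mirror3 (zmap y)"
  by (cases y) (simp add: zmap_def mirror3_def mirror_append)

lemma zmap_inv_mirror3: "zmap_inv (mirror3 y) = mirror3 (zmap_inv y)"
  by (cases y) (simp add: zmap_inv_def mirror3_def take_mirror drop_mirror)

lemma zmap_J:
  assumes "y \<in> J n"
  shows "zmap y \<in> I n \<and> zmap_inv (zmap y) = y"
proof -
  obtain A B C where y: "y = (A, B, C)" by (cases y)
  have "C \<noteq> []" using assms by (auto simp: y J_def R_def)
  then have "0 < hgt C 1 \<or> 0 < hgt (mirror C) 1"
    using hgt_Suc[of 0 C] by (auto simp: stepval_def)
  then show ?thesis
  proof
    assume "0 < hgt (mirror C) 1"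
    moreover have "mirror3 y \<in> J n" using assms by (simp add: mirror3_in_J_iff)
    ultimately have "zmap (mirror3 y) \<in> I n \<and> zmap_inv (zmap (mirror3 y)) = mirror3 y"
      using zmap_J_if_up_first[of "mirror A" "mirror B" "mirror C" n] by (simp add: y mirror3_def)
    then show ?thesis by (simp add: zmap_mirror3 zmap_inv_mirror3 mirror3_in_I_iff)
  qed (use zmap_J_if_up_first assms y in simp)
qed

lemma zmap_inv_I:
  assumes "y \<in> I n"
  shows "zmap_inv y \<in> J n \<and> zmap (zmap_inv y) = y"
proof -
  obtain A B C where y: "y = (A, B, C)" by (cases y)
  have "hgt C (length C) = 0" using assms by (auto simp: y I_def U_def mem_T_iff)
  then have "one_sided_from C (one_sided_start C)" by (rule one_sided_from_start)
  then consider "\<And>i. one_sided_start C \<le> i \<Longrightarrow> i \<le> length C \<Longrightarrow> 0 \<le> hgt C i"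
    | "\<And>i. one_sided_start (mirror C) \<le> i \<Longrightarrow> i \<le> length (mirror C) \<Longrightarrow> 0 \<le> hgt (mirror C) i"
    unfolding one_sided_from_def by auto
  then show ?thesis
  proof cases
    case 2
    moreover have "mirror3 y \<in> I n" using assms by (simp add: mirror3_in_I_iff)
    ultimately have "zmap_inv (mirror3 y) \<in> J n \<and> zmap (zmap_inv (mirror3 y)) = mirror3 y"
      using zmap_inv_I_if_nonneg_tail[of "mirror A" "mirror B" "mirror C" n] by (simp add: y mirror3_def)
    then show ?thesis by (simp add: zmap_mirror3 zmap_inv_mirror3 mirror3_in_J_iff)
  qed (use zmap_inv_I_if_nonneg_tail assms y in simp)
qed

lemma bij_betw_zmap: "bij_betw zmap (J n) (I n)"
  by (rule bij_betw_byWitness[where f' = zmap_inv]) (use zmap_J zmap_inv_I in blast)+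

section \<open>The bijection g and the count\<close>

lemma R_disjoint_UV: "y \<in> R n \<Longrightarrow> y \<notin> U n \<and> y \<notin> V n"
  by (auto simp: R_def U_def V_def)

lemma bij_betw_gmap_R: "bij_betw (gmap n) (R n) (D_sign n 0)"
  using bij_betw_rmap by (rule bij_betw_cong[THEN iffD1, rotated]) (simp add: gmap_def)

lemma bij_betw_gmap_U: "bij_betw (gmap n) (U n) (D_sign n 1)"
  using bij_betw_smap
  by (rule bij_betw_cong[THEN iffD1, rotated]) (auto simp: gmap_def dest: R_disjoint_UV)

lemma bij_betw_gmap_neg: "bij_betw (gmap n) ((V n - U n) \<union> J n) (D_sign n (-1))"
proof -
  have I_sub: "I n \<subseteq> V n" by (simp add: I_def)
  have "bij_betw tmap (V n - U n) (tmap ` (V n - U n))"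
    using bij_betw_tmap by (rule bij_betw_subset) auto
  then have VU: "bij_betw (gmap n) (V n - U n) (tmap ` (V n - U n))"
    by (rule bij_betw_cong[THEN iffD1, rotated]) (auto simp: gmap_def dest: R_disjoint_UV)
  have "bij_betw (tmap \<circ> zmap) (J n) (tmap ` I n)"
    using bij_betw_zmap bij_betw_subset[OF bij_betw_tmap I_sub refl] by (rule bij_betw_trans)
  then have J: "bij_betw (gmap n) (J n) (tmap ` I n)"
    by (rule bij_betw_cong[THEN iffD1, rotated]) (simp add: gmap_def J_def)
  have inj: "inj_on tmap (V n)" using bij_betw_tmap by (rule bij_betw_imp_inj_on)
  have "tmap ` (V n - U n) \<inter> tmap ` I n = {}"
    using inj_on_image_Int[OF inj, of "V n - U n" "I n"] I_sub by (auto simp: I_def)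
  moreover have "tmap ` (V n - U n) \<union> tmap ` I n = D_sign n (-1)"
  proof -
    have "(V n - U n) \<union> I n = V n" by (auto simp: I_def)
    then show ?thesis
      using bij_betw_imp_surj_on[OF bij_betw_tmap] by (metis image_Un)
  qed
  ultimately show ?thesis
    using bij_betw_combine[OF VU J] by simp
qed

lemma T_decomposition: "T n = R n \<union> U n \<union> ((V n - U n) \<union> J n)"
  by (auto simp: J_def R_def U_def V_def)

lemma D_decomposition: "D n = D_sign n 0 \<union> D_sign n 1 \<union> D_sign n (-1)"
  by (auto simp: D_sign_def sgn_if)

lemma bij_betw_gmap: "bij_betw (gmap n) (T n) (D n)"
  unfolding T_decomposition D_decomposition
  by (intro bij_betw_combine bij_betw_gmap_R bij_betw_gmap_U bij_betw_gmap_neg)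
    (auto simp: D_sign_def)

definition balanced_paths :: "nat \<Rightarrow> path set" where
  "balanced_paths i = {P. ups P = i \<and> downs P = i}"

lemma balanced_paths_eq_shuffles:
  "balanced_paths i = shuffles (replicate i True) (replicate i False)"
proof -
  have "P \<in> shuffles (replicate a True) (replicate b False) \<longleftrightarrow> ups P = a \<and> downs P = b" for P a b
  proof (induction P arbitrary: a b)
    case (Cons z P)
    show ?case
    proof (cases z)
      case True
      then show ?thesis using Cons[of "a - 1" b]
        by (cases a) (auto simp: Cons_in_shuffles_iff ups_def downs_def Cons_replicate_eq)
    next
      case False
      then show ?thesis using Cons[of a "b - 1"]
        by (cases b) (auto simp: Cons_in_shuffles_iff ups_def downs_def Cons_replicate_eq)
    qed
  qed (auto simp: ups_def downs_def)
  then show ?thesis by (auto simp: balanced_paths_def)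
qed

lemma finite_balanced_paths: "finite (balanced_paths i)"
  by (simp add: balanced_paths_eq_shuffles)

lemma card_balanced_paths: "card (balanced_paths i) = (2 * i choose i)"
proof -
  have "set (replicate i True) \<inter> set (replicate i False) = {}" by auto
  from card_disjoint_shuffles[OF this] show ?thesis
    by (simp add: balanced_paths_eq_shuffles mult_2)
qed

lemma card_T:
  "card (T n) = (\<Sum>(i, j, k) \<in> {(i, j, k). i + j + k = n}.
     (2 * i choose i) * (2 * j choose j) * (2 * k choose k))"
proof -
  let ?S = "{(i, j, k). i + j + k = n}"
  let ?block = "\<lambda>(i, j, k). balanced_paths i \<times> balanced_paths j \<times> balanced_paths k"
  have "finite ?S"
    by (rule finite_subset[of _ "{..n} \<times> {..n} \<times> {..n}"]) auto
  have "T n = (\<Union>s \<in> ?S. ?block s)"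
    by (auto simp: T_def balanced_paths_def)
  also have "card \<dots> = (\<Sum>s \<in> ?S. card (?block s))"
  proof (rule card_UN_disjoint[OF \<open>finite ?S\<close>])
    show "\<forall>s \<in> ?S. finite (?block s)" by (auto simp: finite_balanced_paths)
    show "\<forall>s \<in> ?S. \<forall>t \<in> ?S. s \<noteq> t \<longrightarrow> ?block s \<inter> ?block t = {}"
      by (auto simp: balanced_paths_def)
  qed
  also have "\<dots> = (\<Sum>(i, j, k) \<in> ?S. (2 * i choose i) * (2 * j choose j) * (2 * k choose k))"
    by (rule sum.cong) (auto simp: card_cartesian_product card_balanced_paths)
  finally show ?thesis .
qed

lemma card_D: "card (D n) = (2 * n + 1) * (2 * n choose n)"
proof -
  have "D n = Sigma (balanced_paths n) (\<lambda>H. {..length H})"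
    by (auto simp: D_def balanced_paths_def)
  then have "card (D n) = (\<Sum>H \<in> balanced_paths n. card {..length H})"
    by (simp add: finite_balanced_paths)
  also have "\<dots> = (\<Sum>H \<in> balanced_paths n. 2 * n + 1)"
    by (rule sum.cong) (auto simp: balanced_paths_def ups_plus_downs[symmetric])
  finally show ?thesis by (simp add: card_balanced_paths)
qed

theorem theorem2:
  fixes n :: nat
  assumes "n \<ge> 1"
  shows "bij_betw (gmap n) (T n) (D n)
    \<and> (2 * n + 1) * (2 * n choose n)
        = (\<Sum>(i, j, k) \<in> {(i, j, k). i + j + k = n}.
             (2 * i choose i) * (2 * j choose j) * (2 * k choose k))"
  using bij_betw_gmap[of n] bij_betw_same_card[OF bij_betw_gmap[of n]] card_T card_D
  by simp

end
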